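(* In the setting of problem (P) with $f_0(x)=\mathbb{E}_\xi[F(x,\xi)]$, run Algorithm LCSPG with $\gamma_k>L_0/2$, $\beta_k\in(0,2\gamma_k-L_0)$, and suppose there is a constant $B>0$ such that $\|\lambda^{k+1}\|\le B$ for all $k$ and all realizations. Let $\zeta^k:=G^k-\nabla f_0(x^k)$, $D:=\sqrt{(\psi_0(x^0)-\psi_0^* )/L_0}$ and let $\alpha_0,\dots,\alpha_K\ge0$ be nondecreasing. Then $$\sum_{k=0}^K\frac{\alpha_k(2\gamma_k-\beta_k-L_0)}{4(\gamma_k+L_0+2B\|L\|)^2}\|\partial_x\mathcal{L}(x^{k+1},\lambda^{k+1})\|_-^2\le L_0D^2\alpha_K+\sum_{k=0}^K\Big(\frac{\alpha_k(2\gamma_k-\beta_k-L_0)}{2(\gamma_k+L_0+2B\|L\|)^2}+\frac{\alpha_K}{2\beta_k}\Big)\|\zeta^k\|^2,$$ $$\sum_{k=0}^K\alpha_k(2\gamma_k-\beta_k-L_0)\langle\lambda^{k+1},|\psi(x^{k+1})-\eta|\rangle\le2BL_0\|L\|D^2\alpha_K+B\|L\|\sum_{k=0}^K\frac{\alpha_K\|\zeta^k\|^2}{\beta_k}+B\sum_{k=0}^K\alpha_k(2\gamma_k-\beta_k-L_0)\|\eta-\eta^k\|,$$ where $|\cdot|$ is componentwise.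
   Context: Problem (P): minimize $\psi_0(x):=f_0(x)+\chi_0(x)$ over $x\in\mathbb{R}^d$ subject to $\psi_i(x):=f_i(x)+\chi_i(x)\le\eta_i$, $i\in[m]:=\{1,\dots,m\}$. Standing assumptions: $\chi_0$ is proper, convex, lower semicontinuous; each $\chi_i$ ($i\in[m]$) is convex and continuous on $\mathrm{dom}\,\chi_0$; each $f_i$ ($i=0,\dots,m$) is differentiable with $L_i$-Lipschitz gradient on $\mathrm{dom}\,\chi_0$; $L:=(L_1,\dots,L_m)^\top$; the optimal value $\psi_0^*$ of (P) is finite; the feasible set $\mathcal{X}:=\{x\in\mathrm{dom}\,\chi_0:\psi_i(x)\le\eta_i,\ i\in[m]\}$ is nonempty and compact. Write $\psi=(\psi_1,\dots,\psi_m)^\top$; vector inequalities are componentwise. Subdifferential: $\partial\psi_i(x):=\nabla f_i(x)+\partial\chi_i(x)$. Lagrangian $\mathcal{L}(x,\lambda)=\psi_0(x)+\sum_{i=1}^m\lambda_i(\psi_i(x)-\eta_i)$, $\partial_x\mathcal{L}(x,\lambda):=\partial\psi_0(x)+\sum_i\lambda_i\partial\psi_i(x)$; for a set $S$, $\|S\|_-:=\inf\{\|s\|:s\in S\}$. Stochastic setting: $f_0(x)=\mathbb{E}_\xi[F(x,\xi)]$ with $F(\cdot,\xi)$ differentiable; a stochastic first-order oracle returns $\nabla F(x,\xi)$ with $\mathbb{E}[\nabla F(x,\xi)]=\nabla f_0(x)$ and $\mathbb{E}\|\nabla F(x,\xi)-\nabla f_0(x)\|^2\le\sigma^2$. Algorithm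 LCSPG: given $x^0\in\mathrm{dom}\,\chi_0$, $\eta^0$ with $\psi(x^0)<\eta^0<\eta$, batch sizes $b_k$, $\gamma_k>0$. At step $k$: draw $b_k$ i.i.d. samples $\xi_{1,k},\dots,\xi_{b_k,k}$ and set $G^k=\frac1{b_k}\sum_{j}\nabla F(x^k,\xi_{j,k})$; set $\psi_0^k(x)=\langle G^k,x\rangle+\frac{\gamma_k}{2}\|x-x^k\|^2+\chi_0(x)$ and, for $i\in[m]$, $\psi_i^k(x)=f_i(x^k)+\langle\nabla f_i(x^k),x-x^k\rangle+\frac{L_i}{2}\|x-x^k\|^2+\chi_i(x)$; let $x^{k+1}$ minimize $\psi_0^k$ subject to $\psi_i^k(x)\le\eta_i^k$, $i\in[m]$; set $\eta^{k+1}=\eta^k+\delta^k$ with $\delta^k>0$ and $\eta^{k+1}<\eta$. A Lagrange multiplier $\lambda^{k+1}\in\mathbb{R}^m_+$ satisfies $0\in\partial\psi_0^k(x^{k+1})+\sum_i\lambda_i^{k+1}\partial\psi_i^k(x^{k+1})$ and $\lambda_i^{k+1}(\psi_i^k(x^{k+1})-\eta_i^k)=0$. *)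

theory Defs
  imports "HOL-Analysis.Analysis"
begin

text \<open>Convex subdifferential of a real-valued function h whose effective domain is S
  (h is regarded as +infinity outside S).\<close>
definition subdiff :: "'a::real_inner set \<Rightarrow> ('a \<Rightarrow> real) \<Rightarrow> 'a \<Rightarrow> 'a set" where
  "subdiff S h x = {g. \<forall>y\<in>S. h x + inner g (y - x) \<le> h y}"

definition vnorm :: "nat \<Rightarrow> (nat \<Rightarrow> real) \<Rightarrow> real" where
  "vnorm m v = sqrt (\<Sum>i=1..m. (v i)\<^sup>2)"

definition setnorm_minus :: "'a::real_normed_vector set \<Rightarrow> real" where
  "setnorm_minus S = Inf (norm ` S)"

text \<open>Feasible set of (P): index 0 is the objective, indices 1..m the constraints,
  C = dom chi_0.\<close>
definition feasible_set ::
  "'a set \<Rightarrow> (nat \<Rightarrow> 'a \<Rightarrow> real) \<Rightarrow> (nat \<Rightarrow> 'a \<Rightarrow> real) \<Rightarrow> nat \<Rightarrow> (nat \<Rightarrow> real) \<Rightarrow> 'a set" where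
  "feasible_set C f chi m eta = {x\<in>C. \<forall>i\<in>{1..m}. f i x + chi i x \<le> eta i}"

definition lagr_subdiff ::
  "'a::real_inner set \<Rightarrow> (nat \<Rightarrow> 'a \<Rightarrow> 'a) \<Rightarrow> (nat \<Rightarrow> 'a \<Rightarrow> real) \<Rightarrow> nat \<Rightarrow> (nat \<Rightarrow> real) \<Rightarrow> 'a \<Rightarrow> 'a set"
  where
  "lagr_subdiff C gf chi m lam x =
     {gf 0 x + v0 + (\<Sum>i=1..m. lam i *\<^sub>R (gf i x + v i)) | v0 v.
        v0 \<in> subdiff C (chi 0) x \<and> (\<forall>i\<in>{1..m}. v i \<in> subdiff C (chi i) x)}"

end

theory Submission
  imports Defs
begin

text \<open>Pairing the KKT condition of the k-th subproblem with the step d = x (k+1) - x k,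
  complementary slackness together with feasibility of x k for the increasing levels etak k makes
  every multiplier term nonnegative. With the descent lemma and Young's inequality for the
  gradient noise zeta k = G k - grad f 0 (x k) this gives the sufficient decrease
  (2 gamma k - beta k - L 0)/2 |d|^2 \<le> psi 0 (x k) - psi 0 (x (k+1)) + |zeta k|^2/(2 beta k).
  Weighting with the nondecreasing alpha k and telescoping down to psistar bounds the weighted
  squared steps by 2 alpha K (psi 0 (x 0) - psistar) plus noise. Both estimates then reduce to
  one step: the KKT condition exhibits an element of the Lagrangian subdifferential of norm at
  most (gamma k + L 0 + 2 B |L|) |d| + |zeta k|, and an active linearised constraint differs from
  the true one by at most L i |d|^2.\<close>

lemma has_real_derivative_along_line:
  fixes f :: "'a::real_inner \<Rightarrow> real"
  assumes "(f has_derivative (\<lambda>h. inner g h)) (at (x + t *\<^sub>R d))"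
  shows "((\<lambda>s. f (x + s *\<^sub>R d)) has_real_derivative inner g d) (at t)"
proof -
  have "((\<lambda>s. x + s *\<^sub>R d) has_derivative (\<lambda>h. h *\<^sub>R d)) (at t)"
    by (auto intro!: derivative_eq_intros)
  from has_derivative_compose[OF this assms]
  have "((\<lambda>s. f (x + s *\<^sub>R d)) has_derivative (\<lambda>h. h * inner g d)) (at t)"
    by (simp add: o_def)
  then show ?thesis
    by (simp add: has_field_derivative_def mult.commute[of _ "inner g d"])
qed

lemma descent_lemma:
  fixes f :: "'a::real_inner \<Rightarrow> real"
  assumes C: "convex C" and xC: "x \<in> C" and yC: "y \<in> C"
    and der: "\<And>z. z \<in> C \<Longrightarrow> (f has_derivative (\<lambda>h. inner (g z) h)) (at z)"
    and lip: "\<And>u v. u \<in> C \<Longrightarrow> v \<in> C \<Longrightarrow> norm (g u - g v) \<le> L * norm (u - v)"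
  shows "\<bar>f y - f x - inner (g x) (y - x)\<bar> \<le> L / 2 * (norm (y - x))\<^sup>2"
proof -
  define d where "d = y - x"
  define r where "r = (\<lambda>t. f (x + t *\<^sub>R d) - t * inner (g x) d)"
  define q where "q = (\<lambda>t::real. L / 2 * t\<^sup>2 * (norm d)\<^sup>2)"
  have segment: "x + t *\<^sub>R d \<in> C" if "0 \<le> t" "t \<le> 1" for t
  proof -
    have "x + t *\<^sub>R d = (1 - t) *\<^sub>R x + t *\<^sub>R y" by (simp add: d_def algebra_simps)
    then show ?thesis using convexD_alt[OF C xC yC] that by simp
  qed
  have r_deriv: "(r has_real_derivative inner (g (x + t *\<^sub>R d) - g x) d) (at t)"
    if "0 \<le> t" "t \<le> 1" for t
    unfolding r_def inner_diff_left
    by (rule derivative_eq_intros has_real_derivative_along_line der segment that refl | simp)+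
  have q_deriv: "(q has_real_derivative L * t * (norm d)\<^sup>2) (at t)" for t
    unfolding q_def by (rule derivative_eq_intros refl | simp)+
  have r'_bound: "\<bar>inner (g (x + t *\<^sub>R d) - g x) d\<bar> \<le> L * t * (norm d)\<^sup>2"
    if "0 \<le> t" "t \<le> 1" for t
  proof -
    have "\<bar>inner (g (x + t *\<^sub>R d) - g x) d\<bar> \<le> norm (g (x + t *\<^sub>R d) - g x) * norm d"
      by (rule Cauchy_Schwarz_ineq2)
    also have "\<dots> \<le> L * norm (t *\<^sub>R d) * norm d"
      using lip[OF segment[OF that] xC] by (intro mult_right_mono) auto
    also have "\<dots> = L * t * (norm d)\<^sup>2" using that by (simp add: power2_eq_square)
    finally show ?thesis .
  qed
  have "r 1 - q 1 \<le> r 0 - q 0"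
  proof (rule DERIV_nonpos_imp_nonincreasing[of 0 1 "\<lambda>t. r t - q t", simplified])
    fix t :: real assume t: "0 \<le> t" "t \<le> 1"
    show "\<exists>y. ((\<lambda>t. r t - q t) has_real_derivative y) (at t) \<and> y \<le> 0"
      by (rule exI, rule conjI, rule DERIV_diff[OF r_deriv[OF t] q_deriv])
        (use r'_bound[OF t] in \<open>simp add: abs_le_iff\<close>)
  qed
  moreover have "r 0 + q 0 \<le> r 1 + q 1"
  proof (rule DERIV_nonneg_imp_nondecreasing[of 0 1 "\<lambda>t. r t + q t", simplified])
    fix t :: real assume t: "0 \<le> t" "t \<le> 1"
    show "\<exists>y. ((\<lambda>t. r t + q t) has_real_derivative y) (at t) \<and> 0 \<le> y"
      by (rule exI, rule conjI, rule DERIV_add[OF r_deriv[OF t] q_deriv])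
        (use r'_bound[OF t] in \<open>simp add: abs_le_iff\<close>)
  qed
  ultimately show ?thesis
    unfolding abs_le_iff by (simp add: r_def q_def d_def inner_diff_right)
qed

lemma vnorm_nonneg: "0 \<le> vnorm m v"
  by (simp add: vnorm_def sum_nonneg)

lemma sum_mult_le_vnorm: "(\<Sum>i=1..m. u i * v i) \<le> vnorm m u * vnorm m v"
proof -
  have "(\<Sum>i=1..m. u i * v i) \<le> (\<Sum>i=1..m. \<bar>u i\<bar> * \<bar>v i\<bar>)"
    by (rule sum_mono) (simp flip: abs_mult)
  also have "\<dots> \<le> vnorm m u * vnorm m v"
    using L2_set_mult_ineq unfolding vnorm_def L2_set_def .
  finally show ?thesis .
qed

lemma setnorm_minus_le: "w \<in> S \<Longrightarrow> setnorm_minus S \<le> norm w"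
  unfolding setnorm_minus_def by (rule cInf_lower) (auto intro: bdd_belowI[of _ 0])

lemma setnorm_minus_nonneg: "w \<in> S \<Longrightarrow> 0 \<le> setnorm_minus S"
  unfolding setnorm_minus_def by (rule cInf_greatest) auto

lemma young_ineq:
  fixes a b \<beta> :: real
  assumes "0 < \<beta>"
  shows "a * b \<le> a\<^sup>2 / (2 * \<beta>) + \<beta> / 2 * b\<^sup>2"
proof -
  have "0 \<le> (a - \<beta> * b)\<^sup>2" by simp
  then show ?thesis using assms by (simp add: field_simps power2_eq_square)
qed

lemma weighted_telescoping_le:
  fixes a c e \<phi> :: "nat \<Rightarrow> real"
  assumes a_nonneg: "\<And>k. k \<le> K \<Longrightarrow> 0 \<le> a k" and a_le: "\<And>k. k \<le> K \<Longrightarrow> a k \<le> a K"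
    and c_nonneg: "\<And>k. k \<le> K \<Longrightarrow> 0 \<le> c k"
    and c_le: "\<And>k. k \<le> K \<Longrightarrow> c k \<le> 2 * (\<phi> k - \<phi> (Suc k) + e k)"
    and lb_le: "lb \<le> \<phi> (Suc K)"
  shows "(\<Sum>k=0..K. a k * c k) \<le> 2 * a K * (\<phi> 0 - lb) + 2 * a K * (\<Sum>k=0..K. e k)"
proof -
  have "a k * c k \<le> 2 * a K * (\<phi> k - \<phi> (Suc k) + e k)" if "k \<le> K" for k
  proof -
    have "a k * c k \<le> a K * c k" using that a_le c_nonneg by (simp add: mult_right_mono)
    also have "\<dots> \<le> a K * (2 * (\<phi> k - \<phi> (Suc k) + e k))"
      using that a_nonneg c_le by (simp add: mult_left_mono)
    finally show ?thesis by (simp add: algebra_simps)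
  qed
  then have "(\<Sum>k=0..K. a k * c k) \<le> (\<Sum>k=0..K. 2 * a K * (\<phi> k - \<phi> (Suc k) + e k))"
    by (intro sum_mono) auto
  also have "\<dots> = 2 * a K * (\<phi> 0 - \<phi> (Suc K)) + 2 * a K * (\<Sum>k=0..K. e k)"
    by (simp add: sum.distrib sum_telescope atLeast0AtMost flip: sum_distrib_left distrib_left)
  also have "\<dots> \<le> 2 * a K * (\<phi> 0 - lb) + 2 * a K * (\<Sum>k=0..K. e k)"
    using lb_le a_nonneg[of K] by (simp add: mult_left_mono)
  finally show ?thesis .
qed

text \<open>One run of LCSPG for a fixed realisation of the samples. Only the KKT system of each subproblem
  enters, not its minimality, and the G k may be arbitrary vectors: the bounds hold pathwise.\<close>
locale lcspg_run =
  fixes C :: "'a::real_inner set"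
    and f :: "nat \<Rightarrow> 'a \<Rightarrow> real" and gf :: "nat \<Rightarrow> 'a \<Rightarrow> 'a"
    and chi :: "nat \<Rightarrow> 'a \<Rightarrow> real" and Lc :: "nat \<Rightarrow> real"
    and m :: nat and eta :: "nat \<Rightarrow> real" and psistar :: real
    and x :: "nat \<Rightarrow> 'a" and G :: "nat \<Rightarrow> 'a" and etak :: "nat \<Rightarrow> nat \<Rightarrow> real"
    and lam :: "nat \<Rightarrow> nat \<Rightarrow> real"
    and gamma beta :: "nat \<Rightarrow> real" and B :: real
  assumes C_convex: "convex C"
    and f_diff: "\<And>i y. i \<in> {0..m} \<Longrightarrow> y \<in> C \<Longrightarrow>
                   (f i has_derivative (\<lambda>h. inner (gf i y) h)) (at y)"
    and gf_lip: "\<And>i y z. i \<in> {0..m} \<Longrightarrow> y \<in> C \<Longrightarrow> z \<in> C \<Longrightarrow>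
                   norm (gf i y - gf i z) \<le> Lc i * norm (y - z)"
    and L_nonneg: "\<And>i. i \<in> {0..m} \<Longrightarrow> 0 \<le> Lc i"
    and psistar_def: "psistar = Inf ((\<lambda>y. f 0 y + chi 0 y) ` feasible_set C f chi m eta)"
    and psistar_finite: "bdd_below ((\<lambda>y. f 0 y + chi 0 y) ` feasible_set C f chi m eta)"
    and x0: "x 0 \<in> C"
    and eta0: "\<And>i. i \<in> {1..m} \<Longrightarrow> f i (x 0) + chi i (x 0) < etak 0 i \<and> etak 0 i < eta i"
    and eta_step: "\<And>k i. i \<in> {1..m} \<Longrightarrow> etak k i < etak (Suc k) i \<and> etak (Suc k) i < eta i"
    and beta_rng: "\<And>k. 0 < beta k \<and> beta k < 2 * gamma k - Lc 0"
    and x_feas: "\<And>k. x (Suc k) \<in> C \<and> (\<forall>i\<in>{1..m}.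
          f i (x k) + inner (gf i (x k)) (x (Suc k) - x k) + Lc i / 2 * (norm (x (Suc k) - x k))\<^sup>2
            + chi i (x (Suc k)) \<le> etak k i)"
    and lam_nonneg: "\<And>k i. i \<in> {1..m} \<Longrightarrow> 0 \<le> lam (Suc k) i"
    and lam_kkt: "\<And>k. \<exists>v0 v. v0 \<in> subdiff C (chi 0) (x (Suc k))
          \<and> (\<forall>i\<in>{1..m}. v i \<in> subdiff C (chi i) (x (Suc k)))
          \<and> 0 = G k + gamma k *\<^sub>R (x (Suc k) - x k) + v0
               + (\<Sum>i=1..m. lam (Suc k) i *\<^sub>R
                    (gf i (x k) + Lc i *\<^sub>R (x (Suc k) - x k) + v i))"
    and lam_cs: "\<And>k i. i \<in> {1..m} \<Longrightarrow> lam (Suc k) i *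
          (f i (x k) + inner (gf i (x k)) (x (Suc k) - x k) + Lc i / 2 * (norm (x (Suc k) - x k))\<^sup>2
            + chi i (x (Suc k)) - etak k i) = 0"
    and lam_bound: "\<And>k. vnorm m (lam (Suc k)) \<le> B"
begin

lemma iterate_in_dom: "x k \<in> C"
  by (cases k) (use x0 x_feas in auto)

lemma linearization_bounds:
  assumes "i \<in> {0..m}" "y \<in> C" "z \<in> C"
  shows "f i z \<le> f i y + inner (gf i y) (z - y) + Lc i / 2 * (norm (z - y))\<^sup>2"
    and "f i y + inner (gf i y) (z - y) - Lc i / 2 * (norm (z - y))\<^sup>2 \<le> f i z"
proof -
  have "\<bar>f i z - f i y - inner (gf i y) (z - y)\<bar> \<le> Lc i / 2 * (norm (z - y))\<^sup>2"
    by (rule descent_lemma[OF C_convex assms(2,3)]) (use f_diff gf_lip assms(1) in auto)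
  then show "f i z \<le> f i y + inner (gf i y) (z - y) + Lc i / 2 * (norm (z - y))\<^sup>2"
    and "f i y + inner (gf i y) (z - y) - Lc i / 2 * (norm (z - y))\<^sup>2 \<le> f i z"
    unfolding abs_le_iff by linarith+
qed

lemma etak_less_eta: "i \<in> {1..m} \<Longrightarrow> etak k i < eta i"
  by (cases k) (use eta0 eta_step in auto)

lemma iterate_level_feasible:
  assumes i: "i \<in> {1..m}"
  shows "f i (x k) + chi i (x k) \<le> etak k i"
proof (cases k)
  case 0
  then show ?thesis using eta0[OF i] by simp
next
  case (Suc j)
  have "f i (x (Suc j)) \<le> f i (x j) + inner (gf i (x j)) (x (Suc j) - x j)
      + Lc i / 2 * (norm (x (Suc j) - x j))\<^sup>2"
    using i by (intro linearization_bounds iterate_in_dom) auto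
  then show ?thesis using x_feas[of j] eta_step[OF i, of j] i Suc by fastforce
qed

lemma iterate_feasible: "x k \<in> feasible_set C f chi m eta"
proof -
  have "f i (x k) + chi i (x k) \<le> eta i" if "i \<in> {1..m}" for i
    using iterate_level_feasible[OF that, of k] etak_less_eta[OF that, of k] by linarith
  then show ?thesis
    unfolding feasible_set_def using iterate_in_dom by blast
qed

lemma psistar_le: "psistar \<le> f 0 (x k) + chi 0 (x k)"
  unfolding psistar_def using iterate_feasible psistar_finite by (auto intro: cInf_lower)

lemma multiplier_term_nonneg:
  assumes i: "i \<in> {1..m}" and v: "v \<in> subdiff C (chi i) (x (Suc k))"
  shows "0 \<le> lam (Suc k) i * inner (gf i (x k) + Lc i *\<^sub>R (x (Suc k) - x k) + v) (x (Suc k) - x k)"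
proof (cases "lam (Suc k) i = 0")
  case False
  let ?d = "x (Suc k) - x k"
  have active: "f i (x k) + inner (gf i (x k)) ?d + Lc i / 2 * (norm ?d)\<^sup>2 + chi i (x (Suc k)) = etak k i"
    using lam_cs[OF i, of k] False by simp
  have "chi i (x (Suc k)) + inner v (x k - x (Suc k)) \<le> chi i (x k)"
    using v iterate_in_dom unfolding subdiff_def by blast
  moreover have "inner v (x k - x (Suc k)) = - inner v ?d"
    by (simp add: inner_diff_right)
  moreover have "0 \<le> Lc i * (norm ?d)\<^sup>2"
    using L_nonneg i by simp
  moreover have "inner (gf i (x k) + Lc i *\<^sub>R ?d + v) ?d
      = inner (gf i (x k)) ?d + Lc i * (norm ?d)\<^sup>2 + inner v ?d"
    by (simp add: inner_add_left dot_square_norm)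
  ultimately have "0 \<le> inner (gf i (x k) + Lc i *\<^sub>R ?d + v) ?d"
    using active iterate_level_feasible[OF i, of k] by linarith
  then show ?thesis using lam_nonneg[OF i] by simp
qed simp

lemma kkt_growth:
  "gamma k * (norm (x (Suc k) - x k))\<^sup>2 + chi 0 (x (Suc k)) - chi 0 (x k)
     \<le> inner (G k) (x k - x (Suc k))"
proof -
  let ?d = "x (Suc k) - x k"
  obtain v0 v where v0: "v0 \<in> subdiff C (chi 0) (x (Suc k))"
    and v: "\<forall>i\<in>{1..m}. v i \<in> subdiff C (chi i) (x (Suc k))"
    and kkt: "0 = G k + gamma k *\<^sub>R ?d + v0
               + (\<Sum>i=1..m. lam (Suc k) i *\<^sub>R (gf i (x k) + Lc i *\<^sub>R ?d + v i))"
    using lam_kkt[of k] by blast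
  have "0 = inner (G k + gamma k *\<^sub>R ?d + v0
               + (\<Sum>i=1..m. lam (Suc k) i *\<^sub>R (gf i (x k) + Lc i *\<^sub>R ?d + v i))) ?d"
    by (metis kkt inner_zero_left)
  also have "\<dots> = inner (G k) ?d + gamma k * (norm ?d)\<^sup>2 + inner v0 ?d
      + (\<Sum>i=1..m. lam (Suc k) i * inner (gf i (x k) + Lc i *\<^sub>R ?d + v i) ?d)"
    by (simp add: inner_add_left inner_sum_left dot_square_norm)
  finally have pairing: "\<dots> = 0" ..
  have "0 \<le> (\<Sum>i=1..m. lam (Suc k) i * inner (gf i (x k) + Lc i *\<^sub>R ?d + v i) ?d)"
    using v by (intro sum_nonneg multiplier_term_nonneg) auto
  moreover have "chi 0 (x (Suc k)) + inner v0 (x k - x (Suc k)) \<le> chi 0 (x k)"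
    using v0 iterate_in_dom unfolding subdiff_def by blast
  moreover have "inner v0 (x k - x (Suc k)) = - inner v0 ?d"
    and "inner (G k) (x k - x (Suc k)) = - inner (G k) ?d"
    by (simp_all add: inner_diff_right)
  ultimately show ?thesis
    using pairing by linarith
qed

lemma sufficient_decrease:
  "(2 * gamma k - beta k - Lc 0) / 2 * (norm (x (Suc k) - x k))\<^sup>2
     \<le> f 0 (x k) + chi 0 (x k) - (f 0 (x (Suc k)) + chi 0 (x (Suc k)))
       + (norm (G k - gf 0 (x k)))\<^sup>2 / (2 * beta k)"
proof -
  let ?d = "x (Suc k) - x k" and ?\<zeta> = "G k - gf 0 (x k)"
  have upper: "f 0 (x (Suc k)) \<le> f 0 (x k) + inner (gf 0 (x k)) ?d + Lc 0 / 2 * (norm ?d)\<^sup>2"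
    by (intro linearization_bounds iterate_in_dom) auto
  have "inner (- ?\<zeta>) ?d \<le> norm ?\<zeta> * norm ?d"
    using norm_cauchy_schwarz[of "- ?\<zeta>" ?d] by (simp only: norm_minus_cancel)
  also have "\<dots> \<le> (norm ?\<zeta>)\<^sup>2 / (2 * beta k) + beta k / 2 * (norm ?d)\<^sup>2"
    using beta_rng[of k] by (intro young_ineq) auto
  finally have noise: "inner (- ?\<zeta>) ?d \<le> (norm ?\<zeta>)\<^sup>2 / (2 * beta k) + beta k / 2 * (norm ?d)\<^sup>2" .
  have coefficient: "(2 * gamma k - beta k - Lc 0) / 2 * (norm ?d)\<^sup>2
      = gamma k * (norm ?d)\<^sup>2 - beta k / 2 * (norm ?d)\<^sup>2 - Lc 0 / 2 * (norm ?d)\<^sup>2"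
    by (simp add: algebra_simps diff_divide_distrib)
  have "inner (G k) (x k - x (Suc k)) = inner (- ?\<zeta>) ?d - inner (gf 0 (x k)) ?d"
    by (simp add: inner_diff_left inner_diff_right)
  then show ?thesis
    using kkt_growth[of k] upper noise unfolding coefficient by linarith
qed

lemma weighted_sum_sq_steps_le:
  assumes alpha_nonneg: "\<And>k. k \<le> K \<Longrightarrow> 0 \<le> alpha k"
    and alpha_mono: "\<And>k l. k \<le> l \<Longrightarrow> l \<le> K \<Longrightarrow> alpha k \<le> alpha l"
  shows "(\<Sum>k=0..K. alpha k * (2 * gamma k - beta k - Lc 0) * (norm (x (Suc k) - x k))\<^sup>2)
    \<le> 2 * alpha K * (f 0 (x 0) + chi 0 (x 0) - psistar)
      + (\<Sum>k=0..K. alpha K * (norm (G k - gf 0 (x k)))\<^sup>2 / beta k)"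
proof -
  let ?\<psi>0 = "\<lambda>k. f 0 (x k) + chi 0 (x k)"
  let ?e = "\<lambda>k. (norm (G k - gf 0 (x k)))\<^sup>2 / (2 * beta k)"
  let ?c = "\<lambda>k. (2 * gamma k - beta k - Lc 0) * (norm (x (Suc k) - x k))\<^sup>2"
  have "(\<Sum>k=0..K. alpha k * ?c k)
    \<le> 2 * alpha K * (?\<psi>0 0 - psistar) + 2 * alpha K * (\<Sum>k=0..K. ?e k)"
  proof (rule weighted_telescoping_le[where \<phi> = ?\<psi>0 and e = ?e and c = ?c])
    show "0 \<le> ?c k" if "k \<le> K" for k
      using beta_rng[of k] by simp
    show "?c k \<le> 2 * (?\<psi>0 k - ?\<psi>0 (Suc k) + ?e k)" if "k \<le> K" for k
      using sufficient_decrease[of k] by simp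
  qed (use alpha_nonneg alpha_mono psistar_le in auto)
  then show ?thesis
    by (simp add: sum_distrib_left mult.assoc)
qed

lemma multiplier_weighted_L_le: "(\<Sum>i=1..m. lam (Suc k) i * Lc i) \<le> B * vnorm m Lc"
  by (rule order_trans[OF sum_mult_le_vnorm mult_right_mono]) (use lam_bound vnorm_nonneg in auto)

lemma B_nonneg: "0 \<le> B"
  using vnorm_nonneg lam_bound by (rule order_trans)

text \<open>The KKT condition, solved for the subgradient of chi 0, yields this element.\<close>
lemma kkt_residual_in_lagr_subdiff:
  "(gf 0 (x (Suc k)) - gf 0 (x k)) - (G k - gf 0 (x k)) - gamma k *\<^sub>R (x (Suc k) - x k)
     + (\<Sum>i=1..m. lam (Suc k) i *\<^sub>R ((gf i (x (Suc k)) - gf i (x k)) - Lc i *\<^sub>R (x (Suc k) - x k)))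
   \<in> lagr_subdiff C gf chi m (lam (Suc k)) (x (Suc k))"
proof -
  let ?d = "x (Suc k) - x k"
  obtain v0 v where v0: "v0 \<in> subdiff C (chi 0) (x (Suc k))"
    and v: "\<forall>i\<in>{1..m}. v i \<in> subdiff C (chi i) (x (Suc k))"
    and kkt: "0 = G k + gamma k *\<^sub>R ?d + v0
               + (\<Sum>i=1..m. lam (Suc k) i *\<^sub>R (gf i (x k) + Lc i *\<^sub>R ?d + v i))"
    using lam_kkt[of k] by blast
  have v0_eq: "v0 = - (G k + gamma k *\<^sub>R ?d
      + (\<Sum>i=1..m. lam (Suc k) i *\<^sub>R (gf i (x k) + Lc i *\<^sub>R ?d + v i)))"
    using kkt by (simp add: algebra_simps eq_neg_iff_add_eq_0)
  have "(\<Sum>i=1..m. lam (Suc k) i *\<^sub>R ((gf i (x (Suc k)) - gf i (x k)) - Lc i *\<^sub>R ?d))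
      = (\<Sum>i=1..m. lam (Suc k) i *\<^sub>R (gf i (x (Suc k)) + v i))
        - (\<Sum>i=1..m. lam (Suc k) i *\<^sub>R (gf i (x k) + Lc i *\<^sub>R ?d + v i))"
    by (simp add: algebra_simps flip: sum_subtractf)
  then have "(gf 0 (x (Suc k)) - gf 0 (x k)) - (G k - gf 0 (x k)) - gamma k *\<^sub>R ?d
     + (\<Sum>i=1..m. lam (Suc k) i *\<^sub>R ((gf i (x (Suc k)) - gf i (x k)) - Lc i *\<^sub>R ?d))
    = gf 0 (x (Suc k)) + v0 + (\<Sum>i=1..m. lam (Suc k) i *\<^sub>R (gf i (x (Suc k)) + v i))"
    unfolding v0_eq by (simp add: algebra_simps)
  then show ?thesis
    unfolding lagr_subdiff_def using v0 v by blast
qed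

lemma setnorm_minus_lagr_subdiff_le:
  "setnorm_minus (lagr_subdiff C gf chi m (lam (Suc k)) (x (Suc k)))
     \<le> (gamma k + Lc 0 + 2 * B * vnorm m Lc) * norm (x (Suc k) - x k) + norm (G k - gf 0 (x k))"
proof -
  let ?d = "x (Suc k) - x k" and ?\<zeta> = "G k - gf 0 (x k)"
  let ?r = "\<lambda>i. lam (Suc k) i *\<^sub>R ((gf i (x (Suc k)) - gf i (x k)) - Lc i *\<^sub>R ?d)"
  have grad0: "norm (gf 0 (x (Suc k)) - gf 0 (x k)) \<le> Lc 0 * norm ?d"
    using gf_lip[of 0] iterate_in_dom by simp
  have "norm (?r i) \<le> 2 * norm ?d * (lam (Suc k) i * Lc i)" if i: "i \<in> {1..m}" for i
  proof -
    have "norm ((gf i (x (Suc k)) - gf i (x k)) - Lc i *\<^sub>R ?d)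
        \<le> norm (gf i (x (Suc k)) - gf i (x k)) + norm (Lc i *\<^sub>R ?d)"
      by (rule norm_triangle_ineq4)
    also have "\<dots> \<le> 2 * Lc i * norm ?d"
      using gf_lip[of i] iterate_in_dom L_nonneg i by simp
    finally have "lam (Suc k) i * norm ((gf i (x (Suc k)) - gf i (x k)) - Lc i *\<^sub>R ?d)
        \<le> lam (Suc k) i * (2 * Lc i * norm ?d)"
      using lam_nonneg[OF i] by (rule mult_left_mono)
    then show ?thesis
      using lam_nonneg[OF i] by (simp add: mult_ac)
  qed
  then have "norm (\<Sum>i=1..m. ?r i) \<le> 2 * norm ?d * (\<Sum>i=1..m. lam (Suc k) i * Lc i)"
    unfolding sum_distrib_left by (intro order_trans[OF norm_sum sum_mono]) auto
  also have "\<dots> \<le> 2 * norm ?d * (B * vnorm m Lc)"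
    by (intro mult_left_mono multiplier_weighted_L_le) simp
  finally have sum_bound: "norm (\<Sum>i=1..m. ?r i) \<le> 2 * norm ?d * (B * vnorm m Lc)" .
  have "norm ((gf 0 (x (Suc k)) - gf 0 (x k)) - ?\<zeta> - gamma k *\<^sub>R ?d + (\<Sum>i=1..m. ?r i))
      \<le> norm (gf 0 (x (Suc k)) - gf 0 (x k)) + norm ?\<zeta> + norm (gamma k *\<^sub>R ?d) + norm (\<Sum>i=1..m. ?r i)"
    by (smt (verit) norm_triangle_ineq norm_triangle_ineq4)
  also have "norm (gamma k *\<^sub>R ?d) = gamma k * norm ?d"
    using beta_rng[of k] L_nonneg[of 0] by simp
  finally have "norm ((gf 0 (x (Suc k)) - gf 0 (x k)) - ?\<zeta> - gamma k *\<^sub>R ?d + (\<Sum>i=1..m. ?r i))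
      \<le> (gamma k + Lc 0 + 2 * B * vnorm m Lc) * norm ?d + norm ?\<zeta>"
    using grad0 sum_bound by (simp add: algebra_simps)
  with setnorm_minus_le[OF kkt_residual_in_lagr_subdiff] show ?thesis
    by (rule order_trans)
qed

lemma complementarity_residual_le:
  "(\<Sum>i=1..m. lam (Suc k) i * \<bar>f i (x (Suc k)) + chi i (x (Suc k)) - eta i\<bar>)
     \<le> B * vnorm m (\<lambda>i. eta i - etak k i) + B * vnorm m Lc * (norm (x (Suc k) - x k))\<^sup>2"
proof -
  let ?n = "norm (x (Suc k) - x k)"
  have "lam (Suc k) i * \<bar>f i (x (Suc k)) + chi i (x (Suc k)) - eta i\<bar>
      \<le> lam (Suc k) i * (eta i - etak k i) + lam (Suc k) i * Lc i * ?n\<^sup>2"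
    if i: "i \<in> {1..m}" for i
  proof (cases "lam (Suc k) i = 0")
    case False
    have active: "f i (x k) + inner (gf i (x k)) (x (Suc k) - x k) + Lc i / 2 * ?n\<^sup>2
        + chi i (x (Suc k)) = etak k i"
      using lam_cs[OF i, of k] False by simp
    have "f i (x (Suc k)) \<le> f i (x k) + inner (gf i (x k)) (x (Suc k) - x k) + Lc i / 2 * ?n\<^sup>2"
      and "f i (x k) + inner (gf i (x k)) (x (Suc k) - x k) - Lc i / 2 * ?n\<^sup>2 \<le> f i (x (Suc k))"
      using i by (intro linearization_bounds iterate_in_dom; simp)+
    then have "\<bar>f i (x (Suc k)) + chi i (x (Suc k)) - eta i\<bar> \<le> eta i - etak k i + Lc i * ?n\<^sup>2"
      using active etak_less_eta[OF i, of k] unfolding abs_le_iff by linarith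
    then have "lam (Suc k) i * \<bar>f i (x (Suc k)) + chi i (x (Suc k)) - eta i\<bar>
        \<le> lam (Suc k) i * (eta i - etak k i + Lc i * ?n\<^sup>2)"
      using lam_nonneg[OF i] by (rule mult_left_mono)
    then show ?thesis
      by (simp add: algebra_simps)
  qed simp
  then have "(\<Sum>i=1..m. lam (Suc k) i * \<bar>f i (x (Suc k)) + chi i (x (Suc k)) - eta i\<bar>)
      \<le> (\<Sum>i=1..m. lam (Suc k) i * (eta i - etak k i) + lam (Suc k) i * Lc i * ?n\<^sup>2)"
    by (intro sum_mono) auto
  also have "\<dots> = (\<Sum>i=1..m. lam (Suc k) i * (eta i - etak k i)) + (\<Sum>i=1..m. lam (Suc k) i * Lc i) * ?n\<^sup>2"
    by (simp add: sum.distrib sum_distrib_right)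
  also have "\<dots> \<le> B * vnorm m (\<lambda>i. eta i - etak k i) + B * vnorm m Lc * ?n\<^sup>2"
  proof (rule add_mono)
    show "(\<Sum>i=1..m. lam (Suc k) i * (eta i - etak k i)) \<le> B * vnorm m (\<lambda>i. eta i - etak k i)"
      by (rule order_trans[OF sum_mult_le_vnorm mult_right_mono]) (use lam_bound vnorm_nonneg in auto)
    show "(\<Sum>i=1..m. lam (Suc k) i * Lc i) * ?n\<^sup>2 \<le> B * vnorm m Lc * ?n\<^sup>2"
      using multiplier_weighted_L_le by (rule mult_right_mono) simp
  qed
  finally show ?thesis .
qed

lemma stationarity_bound:
  assumes alpha_nonneg: "\<And>k. k \<le> K \<Longrightarrow> 0 \<le> alpha k"
    and alpha_mono: "\<And>k l. k \<le> l \<Longrightarrow> l \<le> K \<Longrightarrow> alpha k \<le> alpha l"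
  shows "(\<Sum>k=0..K. alpha k * (2 * gamma k - beta k - Lc 0)
         / (4 * (gamma k + Lc 0 + 2 * B * vnorm m Lc)\<^sup>2)
         * (setnorm_minus (lagr_subdiff C gf chi m (lam (Suc k)) (x (Suc k))))\<^sup>2)
      \<le> alpha K * (f 0 (x 0) + chi 0 (x 0) - psistar)
        + (\<Sum>k=0..K. (alpha k * (2 * gamma k - beta k - Lc 0)
                        / (2 * (gamma k + Lc 0 + 2 * B * vnorm m Lc)\<^sup>2)
                      + alpha K / (2 * beta k)) * (norm (G k - gf 0 (x k)))\<^sup>2)"
proof -
  let ?w = "\<lambda>k. alpha k * (2 * gamma k - beta k - Lc 0)"
  let ?M = "\<lambda>k. gamma k + Lc 0 + 2 * B * vnorm m Lc"
  let ?n = "\<lambda>k. norm (x (Suc k) - x k)" and ?z = "\<lambda>k. norm (G k - gf 0 (x k))"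
  let ?S = "\<lambda>k. setnorm_minus (lagr_subdiff C gf chi m (lam (Suc k)) (x (Suc k)))"
  have rescale: "w / (4 * M\<^sup>2) * (2 * M\<^sup>2 * a + 2 * b) = w * a / 2 + w / (2 * M\<^sup>2) * b"
    if "M \<noteq> 0" for w M a b :: real
    using that by (simp add: field_simps power2_eq_square)
  have per_step: "?w k / (4 * (?M k)\<^sup>2) * (?S k)\<^sup>2 \<le> ?w k * (?n k)\<^sup>2 / 2 + ?w k / (2 * (?M k)\<^sup>2) * (?z k)\<^sup>2"
    if "k \<le> K" for k
  proof -
    have w: "0 \<le> ?w k" using alpha_nonneg[OF that] beta_rng[of k] by simp
    have "0 \<le> 2 * B * vnorm m Lc"
      using B_nonneg vnorm_nonneg by simp
    then have M: "0 < ?M k"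
      using beta_rng[of k] L_nonneg[of 0] by simp
    have "(?S k)\<^sup>2 \<le> (?M k * ?n k + ?z k)\<^sup>2"
      using setnorm_minus_lagr_subdiff_le[of k]
        setnorm_minus_nonneg[OF kkt_residual_in_lagr_subdiff]
      by (intro power_mono) auto
    also have "\<dots> \<le> 2 * (?M k)\<^sup>2 * (?n k)\<^sup>2 + 2 * (?z k)\<^sup>2"
      using sum_squares_bound[of "?M k * ?n k" "?z k"]
      unfolding power2_sum power_mult_distrib by linarith
    finally have "?w k / (4 * (?M k)\<^sup>2) * (?S k)\<^sup>2
        \<le> ?w k / (4 * (?M k)\<^sup>2) * (2 * (?M k)\<^sup>2 * (?n k)\<^sup>2 + 2 * (?z k)\<^sup>2)"
      using w M by (intro mult_left_mono) auto
    also have "\<dots> = ?w k * (?n k)\<^sup>2 / 2 + ?w k / (2 * (?M k)\<^sup>2) * (?z k)\<^sup>2"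
      using M by (intro rescale) simp
    finally show ?thesis .
  qed
  have "(\<Sum>k=0..K. ?w k / (4 * (?M k)\<^sup>2) * (?S k)\<^sup>2)
      \<le> (\<Sum>k=0..K. ?w k * (?n k)\<^sup>2 / 2 + ?w k / (2 * (?M k)\<^sup>2) * (?z k)\<^sup>2)"
    using per_step by (intro sum_mono) auto
  also have "\<dots> = (\<Sum>k=0..K. ?w k * (?n k)\<^sup>2) / 2
      + (\<Sum>k=0..K. ?w k / (2 * (?M k)\<^sup>2) * (?z k)\<^sup>2)"
    by (simp add: sum.distrib sum_divide_distrib)
  also have "\<dots> \<le> alpha K * (f 0 (x 0) + chi 0 (x 0) - psistar)
      + (\<Sum>k=0..K. alpha K * (?z k)\<^sup>2 / beta k) / 2
      + (\<Sum>k=0..K. ?w k / (2 * (?M k)\<^sup>2) * (?z k)\<^sup>2)"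
    using weighted_sum_sq_steps_le[where K = K and alpha = alpha, OF alpha_nonneg alpha_mono] by simp
  also have "\<dots> = alpha K * (f 0 (x 0) + chi 0 (x 0) - psistar)
      + (\<Sum>k=0..K. (?w k / (2 * (?M k)\<^sup>2) + alpha K / (2 * beta k)) * (?z k)\<^sup>2)"
    by (simp add: sum_divide_distrib sum.distrib algebra_simps)
  finally show ?thesis .
qed

lemma complementarity_bound:
  assumes alpha_nonneg: "\<And>k. k \<le> K \<Longrightarrow> 0 \<le> alpha k"
    and alpha_mono: "\<And>k l. k \<le> l \<Longrightarrow> l \<le> K \<Longrightarrow> alpha k \<le> alpha l"
  shows "(\<Sum>k=0..K. alpha k * (2 * gamma k - beta k - Lc 0)
          * (\<Sum>i=1..m. lam (Suc k) i * \<bar>f i (x (Suc k)) + chi i (x (Suc k)) - eta i\<bar>))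
      \<le> 2 * B * vnorm m Lc * alpha K * (f 0 (x 0) + chi 0 (x 0) - psistar)
        + B * vnorm m Lc * (\<Sum>k=0..K. alpha K * (norm (G k - gf 0 (x k)))\<^sup>2 / beta k)
        + B * (\<Sum>k=0..K. alpha k * (2 * gamma k - beta k - Lc 0) * vnorm m (\<lambda>i. eta i - etak k i))"
proof -
  let ?w = "\<lambda>k. alpha k * (2 * gamma k - beta k - Lc 0)"
  let ?n = "\<lambda>k. norm (x (Suc k) - x k)"
  have BL: "0 \<le> B * vnorm m Lc"
    using B_nonneg vnorm_nonneg by simp
  have w: "0 \<le> ?w k" if "k \<le> K" for k
    using alpha_nonneg[OF that] beta_rng[of k] by simp
  have "(\<Sum>k=0..K. ?w k * (\<Sum>i=1..m. lam (Suc k) i * \<bar>f i (x (Suc k)) + chi i (x (Suc k)) - eta i\<bar>))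
      \<le> (\<Sum>k=0..K. ?w k * (B * vnorm m (\<lambda>i. eta i - etak k i) + B * vnorm m Lc * (?n k)\<^sup>2))"
    using w by (intro sum_mono mult_left_mono complementarity_residual_le) auto
  also have "\<dots> = (\<Sum>k=0..K. B * (?w k * vnorm m (\<lambda>i. eta i - etak k i))
      + B * vnorm m Lc * (?w k * (?n k)\<^sup>2))"
    by (intro sum.cong) (simp_all add: algebra_simps)
  also have "\<dots> = B * (\<Sum>k=0..K. ?w k * vnorm m (\<lambda>i. eta i - etak k i))
      + B * vnorm m Lc * (\<Sum>k=0..K. ?w k * (?n k)\<^sup>2)"
    by (simp add: sum.distrib sum_distrib_left)
  also have "\<dots> \<le> B * (\<Sum>k=0..K. ?w k * vnorm m (\<lambda>i. eta i - etak k i))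
      + B * vnorm m Lc * (2 * alpha K * (f 0 (x 0) + chi 0 (x 0) - psistar)
        + (\<Sum>k=0..K. alpha K * (norm (G k - gf 0 (x k)))\<^sup>2 / beta k))"
    using weighted_sum_sq_steps_le[where K = K and alpha = alpha, OF alpha_nonneg alpha_mono] BL
    by (intro add_left_mono mult_left_mono) auto
  finally show ?thesis
    by (simp add: algebra_simps)
qed

end

theorem mainTheorem11:
  fixes C :: "'a::euclidean_space set"
    and f :: "nat \<Rightarrow> 'a \<Rightarrow> real" and gf :: "nat \<Rightarrow> 'a \<Rightarrow> 'a"
    and chi :: "nat \<Rightarrow> 'a \<Rightarrow> real" and Lc :: "nat \<Rightarrow> real"
    and m :: nat and eta :: "nat \<Rightarrow> real" and psistar :: real
    and F :: "'a \<Rightarrow> 'b \<Rightarrow> real" and gF :: "'a \<Rightarrow> 'b \<Rightarrow> 'a"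
    and xi :: "nat \<Rightarrow> nat \<Rightarrow> 'b" and b :: "nat \<Rightarrow> nat"
    and x :: "nat \<Rightarrow> 'a" and G :: "nat \<Rightarrow> 'a" and etak :: "nat \<Rightarrow> nat \<Rightarrow> real"
    and lam :: "nat \<Rightarrow> nat \<Rightarrow> real"
    and gamma beta alpha :: "nat \<Rightarrow> real" and B D :: real and K :: nat
  assumes
    \<comment> \<open>chi_0 proper, convex, lsc, with effective domain C\<close>
    C_ne: "C \<noteq> {}" and C_convex: "convex C" and chi0_convex: "convex_on C (chi 0)"
    and chi0_lsc: "closed {(y, t). y \<in> C \<and> chi 0 y \<le> t}"
    \<comment> \<open>chi_i convex and continuous on dom chi_0\<close>
    and chi_convex: "\<And>i. i \<in> {1..m} \<Longrightarrow> convex_on C (chi i)"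
    and chi_cont: "\<And>i. i \<in> {1..m} \<Longrightarrow> continuous_on C (chi i)"
    \<comment> \<open>f_i differentiable with L_i-Lipschitz gradient on dom chi_0\<close>
    and f_diff: "\<And>i y. i \<in> {0..m} \<Longrightarrow> y \<in> C \<Longrightarrow>
                   (f i has_derivative (\<lambda>h. inner (gf i y) h)) (at y)"
    and gf_lip: "\<And>i y z. i \<in> {0..m} \<Longrightarrow> y \<in> C \<Longrightarrow> z \<in> C \<Longrightarrow>
                   norm (gf i y - gf i z) \<le> Lc i * norm (y - z)"
    and L_nonneg: "\<And>i. i \<in> {0..m} \<Longrightarrow> 0 \<le> Lc i"
    and L0_pos: "0 < Lc 0"
    \<comment> \<open>feasible set nonempty and compact; optimal value finite\<close>
    and X_ne: "feasible_set C f chi m eta \<noteq> {}"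
    and X_compact: "compact (feasible_set C f chi m eta)"
    and psistar_def: "psistar = Inf ((\<lambda>y. f 0 y + chi 0 y) ` feasible_set C f chi m eta)"
    and psistar_finite: "bdd_below ((\<lambda>y. f 0 y + chi 0 y) ` feasible_set C f chi m eta)"
    \<comment> \<open>stochastic gradient: F(.,xi) differentiable, mini-batch average (one realization)\<close>
    and F_diff: "\<And>y s. ((\<lambda>z. F z s) has_derivative (\<lambda>h. inner (gF y s) h)) (at y)"
    and b_pos: "\<And>k. 0 < b k"
    and G_def: "\<And>k. G k = (1 / real (b k)) *\<^sub>R (\<Sum>j<b k. gF (x k) (xi j k))"
    \<comment> \<open>Algorithm LCSPG\<close>
    and x0: "x 0 \<in> C"
    and eta0: "\<And>i. i \<in> {1..m} \<Longrightarrow> f i (x 0) + chi i (x 0) < etak 0 i \<and> etak 0 i < eta i"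
    and eta_step: "\<And>k i. i \<in> {1..m} \<Longrightarrow> etak k i < etak (Suc k) i \<and> etak (Suc k) i < eta i"
    and gamma_pos: "\<And>k. Lc 0 / 2 < gamma k"
    and beta_rng: "\<And>k. 0 < beta k \<and> beta k < 2 * gamma k - Lc 0"
    and x_feas: "\<And>k. x (Suc k) \<in> C \<and> (\<forall>i\<in>{1..m}.
          f i (x k) + inner (gf i (x k)) (x (Suc k) - x k) + Lc i / 2 * (norm (x (Suc k) - x k))\<^sup>2
            + chi i (x (Suc k)) \<le> etak k i)"
    and x_min: "\<And>k y. y \<in> C \<Longrightarrow> (\<forall>i\<in>{1..m}.
          f i (x k) + inner (gf i (x k)) (y - x k) + Lc i / 2 * (norm (y - x k))\<^sup>2 + chi i y \<le> etak k i)
        \<Longrightarrow> inner (G k) (x (Suc k)) + gamma k / 2 * (norm (x (Suc k) - x k))\<^sup>2 + chi 0 (x (Suc k))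
            \<le> inner (G k) y + gamma k / 2 * (norm (y - x k))\<^sup>2 + chi 0 y"
    \<comment> \<open>Lagrange multipliers (KKT conditions of the subproblem)\<close>
    and lam_nonneg: "\<And>k i. i \<in> {1..m} \<Longrightarrow> 0 \<le> lam (Suc k) i"
    and lam_kkt: "\<And>k. \<exists>v0 v. v0 \<in> subdiff C (chi 0) (x (Suc k))
          \<and> (\<forall>i\<in>{1..m}. v i \<in> subdiff C (chi i) (x (Suc k)))
          \<and> 0 = G k + gamma k *\<^sub>R (x (Suc k) - x k) + v0
               + (\<Sum>i=1..m. lam (Suc k) i *\<^sub>R
                    (gf i (x k) + Lc i *\<^sub>R (x (Suc k) - x k) + v i))"
    and lam_cs: "\<And>k i. i \<in> {1..m} \<Longrightarrow> lam (Suc k) i *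
          (f i (x k) + inner (gf i (x k)) (x (Suc k) - x k) + Lc i / 2 * (norm (x (Suc k) - x k))\<^sup>2
            + chi i (x (Suc k)) - etak k i) = 0"
    \<comment> \<open>bounded multipliers\<close>
    and B_pos: "0 < B"
    and lam_bound: "\<And>k. vnorm m (lam (Suc k)) \<le> B"
    \<comment> \<open>D and weights\<close>
    and D_def: "D = sqrt ((f 0 (x 0) + chi 0 (x 0) - psistar) / Lc 0)"
    and alpha_nonneg: "\<And>k. k \<le> K \<Longrightarrow> 0 \<le> alpha k"
    and alpha_mono: "\<And>k l. k \<le> l \<Longrightarrow> l \<le> K \<Longrightarrow> alpha k \<le> alpha l"
  shows
    "(\<Sum>k=0..K. alpha k * (2 * gamma k - beta k - Lc 0)
         / (4 * (gamma k + Lc 0 + 2 * B * vnorm m Lc)\<^sup>2)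
         * (setnorm_minus (lagr_subdiff C gf chi m (lam (Suc k)) (x (Suc k))))\<^sup>2)
      \<le> Lc 0 * D\<^sup>2 * alpha K
        + (\<Sum>k=0..K. (alpha k * (2 * gamma k - beta k - Lc 0)
                        / (2 * (gamma k + Lc 0 + 2 * B * vnorm m Lc)\<^sup>2)
                      + alpha K / (2 * beta k)) * (norm (G k - gf 0 (x k)))\<^sup>2)
     \<and> (\<Sum>k=0..K. alpha k * (2 * gamma k - beta k - Lc 0)
          * (\<Sum>i=1..m. lam (Suc k) i * \<bar>f i (x (Suc k)) + chi i (x (Suc k)) - eta i\<bar>))
      \<le> 2 * B * Lc 0 * vnorm m Lc * D\<^sup>2 * alpha K
        + B * vnorm m Lc * (\<Sum>k=0..K. alpha K * (norm (G k - gf 0 (x k)))\<^sup>2 / beta k)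
        + B * (\<Sum>k=0..K. alpha k * (2 * gamma k - beta k - Lc 0) * vnorm m (\<lambda>i. eta i - etak k i))"
proof -
  interpret run: lcspg_run C f gf chi Lc m eta psistar x G etak lam gamma beta B
    by unfold_locales (fact assms)+
  have D_sq: "f 0 (x 0) + chi 0 (x 0) - psistar = Lc 0 * D\<^sup>2"
    using run.psistar_le[of 0] L0_pos unfolding D_def by simp
  show ?thesis
    using run.stationarity_bound[where K = K and alpha = alpha, OF alpha_nonneg alpha_mono]
      run.complementarity_bound[where K = K and alpha = alpha, OF alpha_nonneg alpha_mono]
    unfolding D_sq by (simp add: mult_ac)
qed

end
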